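(* Let $(M,g_M)$ be a connected Riemannian manifold and let $f:(M,g_M)\to\mathbb{R}$ be a smooth function, where $\mathbb{R}$ carries its standard flat metric. Then $f$ is a conformal Riemannian morphism if and only if $f$ is constant or $\mathrm{grad}(f)(x)\neq 0$ for every $x\in M$.
   Context: Let $V,W$ be real inner-product spaces and $T:V\to W$ linear with kernel $K$ and range $R(T)$. $T$ is called a geometric function if there exist a subspace $C\subset V$ with $V=K\oplus C$ and a number $r>0$ such that $\langle T(u),T(v)\rangle=r\langle u,v\rangle$ for all $u,v\in C$; $C$ is called a Conf subspace of $T$ (denoted $\mathrm{Conf}(T)$) and $r$ a conformality factor of $T$. A smooth map $f:(M,g_M)\to(N,g_N)$ between Riemannian manifolds is a conformal Riemannian morphism if there is a smooth function $\wedge_f:M\to\mathbb{R}^{+}$ (the Riemannian factor) such that for every $x\in M$, $df_x:T_xM\to T_{f(x)}N$ is a geometric function with conformality factor $\wedge_f(x)$. The gradient is defined by $df_x(X)=g_M(x)(\mathrm{grad}(f)(x),X)$ for all $X\in T_xM$. *)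

theory Defs
  imports "HOL-Analysis.Analysis"
begin

fun iter_deriv :: "'a::real_normed_vector list \<Rightarrow> ('a \<Rightarrow> 'b::real_normed_vector) \<Rightarrow> 'a \<Rightarrow> 'b" where
  "iter_deriv [] f = f"
| "iter_deriv (v # vs) f = (\<lambda>x. frechet_derivative (iter_deriv vs f) (at x) v)"

definition smooth_on :: "'a::euclidean_space set \<Rightarrow> ('a \<Rightarrow> 'b::real_normed_vector) \<Rightarrow> bool" where
  "smooth_on U f \<longleftrightarrow> open U \<and> (\<forall>vs. iter_deriv vs f differentiable_on U)"

text \<open>A chart is a pair (U, phi) with U an open subset of the manifold and
  phi a homeomorphism of U onto an open subset of the model space 'e.\<close>
type_synonym ('m, 'e) chart = "'m set \<times> ('m \<Rightarrow> 'e)"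

definition chart_inv :: "('m, 'e) chart \<Rightarrow> 'e \<Rightarrow> 'm" where
  "chart_inv c = inv_into (fst c) (snd c)"

definition smooth_manifold :: "'m topology \<Rightarrow> ('m, 'e::euclidean_space) chart set \<Rightarrow> bool" where
  "smooth_manifold X A \<longleftrightarrow>
     Hausdorff_space X \<and> second_countable X \<and>
     topspace X = (\<Union>c\<in>A. fst c) \<and>
     (\<forall>c\<in>A. openin X (fst c) \<and> open (snd c ` fst c) \<and>
        homeomorphic_map (subtopology X (fst c)) (top_of_set (snd c ` fst c)) (snd c)) \<and>
     (\<forall>c\<in>A. \<forall>d\<in>A. smooth_on (snd d ` (fst c \<inter> fst d)) (snd c \<circ> chart_inv d))"

definition smooth_fun :: "('m, 'e::euclidean_space) chart set \<Rightarrow> ('m \<Rightarrow> real) \<Rightarrow> bool" where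
  "smooth_fun A f \<longleftrightarrow> (\<forall>c\<in>A. smooth_on (snd c ` fst c) (f \<circ> chart_inv c))"

text \<open>Riemannian metric in local coordinates: for each chart c and each
  point y of its image, g c y is the metric tensor at the corresponding point,
  acting on coordinate tangent vectors.\<close>
definition riemannian_metric ::
  "'m topology \<Rightarrow> ('m, 'e::euclidean_space) chart set \<Rightarrow> (('m, 'e) chart \<Rightarrow> 'e \<Rightarrow> 'e \<Rightarrow> 'e \<Rightarrow> real) \<Rightarrow> bool" where
  "riemannian_metric X A g \<longleftrightarrow>
     (\<forall>c\<in>A. \<forall>y\<in>snd c ` fst c.
        bilinear (g c y) \<and> (\<forall>u v. g c y u v = g c y v u) \<and> (\<forall>u. u \<noteq> 0 \<longrightarrow> g c y u u > 0)) \<and>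
     (\<forall>c\<in>A. \<forall>u v. smooth_on (snd c ` fst c) (\<lambda>y. g c y u v)) \<and>
     (\<forall>c\<in>A. \<forall>d\<in>A. \<forall>p\<in>fst c \<inter> fst d. \<forall>u v.
        g d (snd d p) u v =
        g c (snd c p) (frechet_derivative (snd c \<circ> chart_inv d) (at (snd d p)) u)
                      (frechet_derivative (snd c \<circ> chart_inv d) (at (snd d p)) v))"

definition riemannian_manifold ::
  "'m topology \<Rightarrow> ('m, 'e::euclidean_space) chart set \<Rightarrow> (('m, 'e) chart \<Rightarrow> 'e \<Rightarrow> 'e \<Rightarrow> 'e \<Rightarrow> real) \<Rightarrow> bool" where
  "riemannian_manifold X A g \<longleftrightarrow> smooth_manifold X A \<and> riemannian_metric X A g"

definition conformality_factor ::
  "('v::real_vector \<Rightarrow> 'v \<Rightarrow> real) \<Rightarrow> ('w::real_vector \<Rightarrow> 'w \<Rightarrow> real) \<Rightarrow> ('v \<Rightarrow> 'w) \<Rightarrow> real \<Rightarrow> bool" where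
  "conformality_factor gV gW T r \<longleftrightarrow>
     linear T \<and> r > 0 \<and>
     (\<exists>C. subspace C \<and> C \<inter> {v. T v = 0} = {0} \<and>
          (\<forall>v. \<exists>k c. T k = 0 \<and> c \<in> C \<and> v = k + c) \<and>
          (\<forall>u\<in>C. \<forall>v\<in>C. gW (T u) (T v) = r * gV u v))"

definition geometric_function ::
  "('v::real_vector \<Rightarrow> 'v \<Rightarrow> real) \<Rightarrow> ('w::real_vector \<Rightarrow> 'w \<Rightarrow> real) \<Rightarrow> ('v \<Rightarrow> 'w) \<Rightarrow> bool" where
  "geometric_function gV gW T \<longleftrightarrow> (\<exists>r. conformality_factor gV gW T r)"

definition dfun :: "('m \<Rightarrow> real) \<Rightarrow> ('m, 'e::euclidean_space) chart \<Rightarrow> 'm \<Rightarrow> 'e \<Rightarrow> real" where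
  "dfun f c x = frechet_derivative (f \<circ> chart_inv c) (at (snd c x))"

definition grad ::
  "(('m, 'e::euclidean_space) chart \<Rightarrow> 'e \<Rightarrow> 'e \<Rightarrow> 'e \<Rightarrow> real) \<Rightarrow> ('m \<Rightarrow> real) \<Rightarrow> ('m, 'e) chart \<Rightarrow> 'm \<Rightarrow> 'e" where
  "grad g f c x = (THE w. \<forall>v. g c (snd c x) w v = dfun f c x v)"

definition conformal_riemannian_morphism_real ::
  "'m topology \<Rightarrow> ('m, 'e::euclidean_space) chart set \<Rightarrow> (('m, 'e) chart \<Rightarrow> 'e \<Rightarrow> 'e \<Rightarrow> 'e \<Rightarrow> real)
   \<Rightarrow> ('m \<Rightarrow> real) \<Rightarrow> bool" where
  "conformal_riemannian_morphism_real X A g f \<longleftrightarrow>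
     smooth_fun A f \<and>
     (\<exists>\<Lambda>. smooth_fun A \<Lambda> \<and> (\<forall>x\<in>topspace X. \<Lambda> x > 0) \<and>
        (\<forall>x\<in>topspace X. \<forall>c\<in>A. x \<in> fst c \<longrightarrow>
           conformality_factor (g c (snd c x)) (\<lambda>a b. a * b) (dfun f c x) (\<Lambda> x)))"

end

theory Submission
  imports Defs "Jordan_Normal_Form.Determinant"
begin

text \<open>
  In a chart, the differential D of f at a point is a linear functional and the gradient is its
  representer w with respect to the metric G, so that D w = G w w is the squared length of the
  gradient. If D \<noteq> 0, Cauchy-Schwarz shows that every conformality factor of D is at most D w,
  and D w itself is one (take the line spanned by w as complement of the kernel); if D = 0,
  every positive number is a conformality factor. So if the gradient never vanishes, its squared
  length serves as Riemannian factor: it is chart independent and smooth, the latter because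
  Cramer's rule expresses the gradient rationally in the metric coefficients. A constant f takes
  the factor 1. Conversely, given a Riemannian factor \<Lambda>, the zero set of the gradient is closed
  and equals the open set where the squared gradient length is less than \<Lambda>; by connectedness it
  is empty or everything, and in the latter case f is constant.
\<close>

section \<open>Smooth functions on open subsets of Euclidean space\<close>

lemma frechet_derivative_cong_open:
  assumes "open U" "x \<in> U" "\<And>y. y \<in> U \<Longrightarrow> f y = g y"
  shows "frechet_derivative f (at x) = frechet_derivative g (at x)"
proof -
  have "(f has_derivative D) (at x) \<longleftrightarrow> (g has_derivative D) (at x)" for D
    using has_derivative_transform_within_open[OF _ assms(1,2)] assms(3) by auto
  then show ?thesis
    unfolding frechet_derivative_def by simp
qed

lemma iter_deriv_cong_open:
  assumes "open U" "\<And>y. y \<in> U \<Longrightarrow> f y = g y" "x \<in> U"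
  shows "iter_deriv vs f x = iter_deriv vs g x"
  using assms(3)
proof (induction vs arbitrary: x)
  case (Cons v vs)
  then show ?case
    using frechet_derivative_cong_open[OF assms(1) Cons.prems, of "iter_deriv vs f"] by simp
qed (use assms in simp)

lemma differentiable_on_cong_open:
  assumes U: "open U" and eq: "\<And>y. y \<in> U \<Longrightarrow> f y = g y" and "f differentiable_on U"
  shows "g differentiable_on U"
  unfolding differentiable_on_eq_differentiable_at[OF U] differentiable_def
proof
  fix x assume "x \<in> U"
  then obtain D where "(f has_derivative D) (at x)"
    using assms(3) unfolding differentiable_on_eq_differentiable_at[OF U] differentiable_def
    by blast
  from has_derivative_transform_within_open[OF this U \<open>x \<in> U\<close> eq]
  show "\<exists>D. (g has_derivative D) (at x)" by blast
qed

lemma smooth_on_cong: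
  assumes "open U" "\<And>y. y \<in> U \<Longrightarrow> f y = g y" "smooth_on U f"
  shows "smooth_on U g"
  unfolding smooth_on_def
proof (intro conjI allI)
  fix vs
  have "\<And>x. x \<in> U \<Longrightarrow> iter_deriv vs f x = iter_deriv vs g x"
    using iter_deriv_cong_open[of U f g] assms(1,2) by blast
  moreover have "iter_deriv vs f differentiable_on U"
    using assms(3) unfolding smooth_on_def by blast
  ultimately show "iter_deriv vs g differentiable_on U"
    by (rule differentiable_on_cong_open[OF assms(1)])
qed (use assms(1) in simp)

lemma smooth_on_imp_differentiable_on: "smooth_on U f \<Longrightarrow> f differentiable_on U"
  unfolding smooth_on_def using iter_deriv.simps(1) by metis

lemma smooth_on_imp_has_derivative:
  assumes "smooth_on U f" "x \<in> U"
  shows "(f has_derivative frechet_derivative f (at x)) (at x)"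
proof -
  have "f differentiable at x"
    using assms smooth_on_imp_differentiable_on differentiable_on_eq_differentiable_at
    unfolding smooth_on_def by blast
  then show ?thesis
    by (simp add: frechet_derivative_works)
qed

lemma smooth_on_imp_continuous_on: "smooth_on U f \<Longrightarrow> continuous_on U f"
  using smooth_on_imp_differentiable_on differentiable_imp_continuous_on by blast

lemma smooth_on_frechet_derivative:
  assumes "smooth_on U f"
  shows "smooth_on U (\<lambda>x. frechet_derivative f (at x) v)"
proof -
  have "iter_deriv vs (iter_deriv [v] f) = iter_deriv (vs @ [v]) f" for vs
    by (induction vs) auto
  then show ?thesis
    using assms unfolding smooth_on_def by simp
qed

lemma smooth_on_const: "open U \<Longrightarrow> smooth_on U (\<lambda>_. c)"
proof -
  have "\<exists>c'. iter_deriv vs (\<lambda>_. c) = (\<lambda>_. c')" for vs :: "'a list"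
    by (induction vs) auto
  then have "iter_deriv vs (\<lambda>_. c) differentiable_on U" for vs :: "'a list"
    by (metis differentiable_on_const)
  then show "open U \<Longrightarrow> smooth_on U (\<lambda>_. c)"
    unfolding smooth_on_def by blast
qed

definition has_derivatives_in :: "'a::real_normed_vector set \<Rightarrow> ('a \<Rightarrow> real) set \<Rightarrow> ('a \<Rightarrow> real) \<Rightarrow> bool"
  where "has_derivatives_in U S k \<longleftrightarrow>
    (\<exists>D. (\<forall>x\<in>U. (k has_derivative D x) (at x)) \<and> (\<forall>v. \<exists>k'\<in>S. \<forall>x\<in>U. D x v = k' x))"

lemma smooth_on_coinduct:
  assumes U: "open U" and "h \<in> S" and step: "\<And>k. k \<in> S \<Longrightarrow> has_derivatives_in U S k"
  shows "smooth_on U h"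
proof -
  have iter: "\<forall>k\<in>S. \<exists>k'\<in>S. \<forall>x\<in>U. iter_deriv vs k x = k' x" for vs
  proof (induction vs)
    case (Cons v vs)
    show ?case
    proof
      fix k assume "k \<in> S"
      then obtain k' where k': "k' \<in> S" "\<forall>x\<in>U. iter_deriv vs k x = k' x"
        using Cons by blast
      obtain D k'' where D: "\<forall>x\<in>U. (k' has_derivative D x) (at x)"
        and k'': "k'' \<in> S" "\<forall>x\<in>U. D x v = k'' x"
        using step[OF k'(1)] unfolding has_derivatives_in_def by blast
      have "iter_deriv (v # vs) k x = k'' x" if "x \<in> U" for x
        using frechet_derivative_cong_open[OF U that, of "iter_deriv vs k" k'] k'(2)
          k''(2)[rule_format, OF that] frechet_derivative_at[OF D[rule_format, OF that]] that
        by simp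
      with k''(1) show "\<exists>k''\<in>S. \<forall>x\<in>U. iter_deriv (v # vs) k x = k'' x"
        by blast
    qed
  qed auto
  have diff: "k differentiable_on U" if "k \<in> S" for k
    using step[OF that] unfolding has_derivatives_in_def
      differentiable_on_eq_differentiable_at[OF U] differentiable_def
    by blast
  show ?thesis
    unfolding smooth_on_def
  proof (intro conjI allI U)
    fix vs
    obtain k where "k \<in> S" and "\<forall>x\<in>U. k x = iter_deriv vs h x"
      using iter[of vs] \<open>h \<in> S\<close> by force
    then show "iter_deriv vs h differentiable_on U"
      using differentiable_on_cong_open[OF U _ diff] by blast
  qed
qed

lemma has_derivatives_in_add:
  assumes "has_derivatives_in U S a" "has_derivatives_in U S b"
    and add: "\<And>a b. a \<in> S \<Longrightarrow> b \<in> S \<Longrightarrow> (\<lambda>x. a x + b x) \<in> S"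
  shows "has_derivatives_in U S (\<lambda>x. a x + b x)"
proof -
  obtain Da Db where Da: "\<forall>x\<in>U. (a has_derivative Da x) (at x)" "\<forall>v. \<exists>a'\<in>S. \<forall>x\<in>U. Da x v = a' x"
    and Db: "\<forall>x\<in>U. (b has_derivative Db x) (at x)" "\<forall>v. \<exists>b'\<in>S. \<forall>x\<in>U. Db x v = b' x"
    using assms(1,2) unfolding has_derivatives_in_def by blast
  have "\<exists>k'\<in>S. \<forall>x\<in>U. Da x v + Db x v = k' x" for v
  proof -
    obtain a' b' where "a' \<in> S" "\<forall>x\<in>U. Da x v = a' x" "b' \<in> S" "\<forall>x\<in>U. Db x v = b' x"
      using Da(2) Db(2) by blast
    then show ?thesis
      by (intro bexI[of _ "\<lambda>x. a' x + b' x"] add) auto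
  qed
  then show ?thesis
    unfolding has_derivatives_in_def using Da(1) Db(1)
    by (intro exI[of _ "\<lambda>x h. Da x h + Db x h"]) (auto intro: has_derivative_add)
qed

lemma has_derivatives_in_mult:
  assumes "a \<in> S" "b \<in> S" "has_derivatives_in U S a" "has_derivatives_in U S b"
    and add: "\<And>a b. a \<in> S \<Longrightarrow> b \<in> S \<Longrightarrow> (\<lambda>x. a x + b x) \<in> S"
    and mult: "\<And>a b. a \<in> S \<Longrightarrow> b \<in> S \<Longrightarrow> (\<lambda>x. a x * b x) \<in> S"
  shows "has_derivatives_in U S (\<lambda>x. a x * b x)"
proof -
  obtain Da Db where Da: "\<forall>x\<in>U. (a has_derivative Da x) (at x)" "\<forall>v. \<exists>a'\<in>S. \<forall>x\<in>U. Da x v = a' x"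
    and Db: "\<forall>x\<in>U. (b has_derivative Db x) (at x)" "\<forall>v. \<exists>b'\<in>S. \<forall>x\<in>U. Db x v = b' x"
    using assms(3,4) unfolding has_derivatives_in_def by blast
  have "\<exists>k'\<in>S. \<forall>x\<in>U. a x * Db x v + Da x v * b x = k' x" for v
  proof -
    obtain a' b' where "a' \<in> S" "\<forall>x\<in>U. Da x v = a' x" "b' \<in> S" "\<forall>x\<in>U. Db x v = b' x"
      using Da(2) Db(2) by blast
    with assms(1,2) show ?thesis
      by (intro bexI[of _ "\<lambda>x. a x * b' x + a' x * b x"] add mult) auto
  qed
  then show ?thesis
    unfolding has_derivatives_in_def using Da(1) Db(1)
    by (intro exI[of _ "\<lambda>x h. a x * Db x h + Da x h * b x"]) (auto intro: has_derivative_mult)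
qed

text \<open>Closed under directional derivatives, hence smooth by smooth_on_coinduct: this is how
  quotients of smooth functions are shown to be smooth.\<close>
inductive_set smooth_algebra_inverse :: "'a::euclidean_space set \<Rightarrow> ('a \<Rightarrow> real) \<Rightarrow> ('a \<Rightarrow> real) set"
  for U d where
  smooth: "smooth_on U a \<Longrightarrow> a \<in> smooth_algebra_inverse U d"
| inverse: "(\<lambda>x. inverse (d x)) \<in> smooth_algebra_inverse U d"
| add: "a \<in> smooth_algebra_inverse U d \<Longrightarrow> b \<in> smooth_algebra_inverse U d \<Longrightarrow>
    (\<lambda>x. a x + b x) \<in> smooth_algebra_inverse U d"
| mult: "a \<in> smooth_algebra_inverse U d \<Longrightarrow> b \<in> smooth_algebra_inverse U d \<Longrightarrow>
    (\<lambda>x. a x * b x) \<in> smooth_algebra_inverse U d"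

lemma has_derivatives_in_smooth_algebra_inverse:
  assumes d: "smooth_on U d" and nz: "\<And>x. x \<in> U \<Longrightarrow> d x \<noteq> 0"
    and "k \<in> smooth_algebra_inverse U d"
  shows "has_derivatives_in U (smooth_algebra_inverse U d) k"
  using assms(3)
proof (induction rule: smooth_algebra_inverse.induct)
  case (smooth a)
  have "(\<lambda>x. frechet_derivative a (at x) v) \<in> smooth_algebra_inverse U d" for v
    using smooth_algebra_inverse.smooth[OF smooth_on_frechet_derivative[OF smooth]] .
  then show ?case
    unfolding has_derivatives_in_def using smooth_on_imp_has_derivative[OF smooth]
    by (intro exI[of _ "\<lambda>x. frechet_derivative a (at x)"] conjI allI bexI) auto
next
  case inverse
  have U: "open U"
    using d unfolding smooth_on_def by blast
  let ?D = "\<lambda>x h. - (inverse (d x) * frechet_derivative d (at x) h * inverse (d x))"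
  have "((\<lambda>x. inverse (d x)) has_derivative ?D x) (at x)" if "x \<in> U" for x
    using has_derivative_compose[OF smooth_on_imp_has_derivative[OF d that]
        has_derivative_inverse'[OF nz[OF that]]] by simp
  moreover have "(\<lambda>x. inverse (d x) * ((-1) * frechet_derivative d (at x) v) * inverse (d x))
      \<in> smooth_algebra_inverse U d" for v
    by (intro smooth_algebra_inverse.mult smooth_algebra_inverse.inverse
        smooth_algebra_inverse.smooth smooth_on_const smooth_on_frechet_derivative U d)
  ultimately show ?case
    unfolding has_derivatives_in_def by (intro exI[of _ ?D]) force
next
  case (add a b)
  then show ?case
    by (intro has_derivatives_in_add smooth_algebra_inverse.add)
next
  case (mult a b)
  then show ?case
    by (intro has_derivatives_in_mult smooth_algebra_inverse.add smooth_algebra_inverse.mult)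
qed

lemma smooth_algebra_inverse_imp_smooth_on:
  assumes "smooth_on U d" "\<And>x. x \<in> U \<Longrightarrow> d x \<noteq> 0" "k \<in> smooth_algebra_inverse U d"
  shows "smooth_on U k"
proof -
  have "open U"
    using assms(1) unfolding smooth_on_def by blast
  then show ?thesis
    using smooth_on_coinduct[of U k "smooth_algebra_inverse U d"] assms(3)
      has_derivatives_in_smooth_algebra_inverse[OF assms(1,2)] by blast
qed

lemma smooth_on_add:
  fixes a b :: "'a::euclidean_space \<Rightarrow> real"
  assumes "smooth_on U a" "smooth_on U b"
  shows "smooth_on U (\<lambda>x. a x + b x)"
proof (rule smooth_algebra_inverse_imp_smooth_on)
  show "smooth_on U (\<lambda>_. 1::real)"
    using assms(1) smooth_on_const smooth_on_def by blast
  show "(\<lambda>x. a x + b x) \<in> smooth_algebra_inverse U (\<lambda>_. 1)"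
    using assms by (intro smooth_algebra_inverse.add smooth_algebra_inverse.smooth)
qed simp

lemma smooth_on_mult:
  fixes a b :: "'a::euclidean_space \<Rightarrow> real"
  assumes "smooth_on U a" "smooth_on U b"
  shows "smooth_on U (\<lambda>x. a x * b x)"
proof (rule smooth_algebra_inverse_imp_smooth_on)
  show "smooth_on U (\<lambda>_. 1::real)"
    using assms(1) smooth_on_const smooth_on_def by blast
  show "(\<lambda>x. a x * b x) \<in> smooth_algebra_inverse U (\<lambda>_. 1)"
    using assms by (intro smooth_algebra_inverse.mult smooth_algebra_inverse.smooth)
qed simp

lemma smooth_on_divide:
  fixes a d :: "'a::euclidean_space \<Rightarrow> real"
  assumes "smooth_on U a" "smooth_on U d" "\<And>x. x \<in> U \<Longrightarrow> d x \<noteq> 0"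
  shows "smooth_on U (\<lambda>x. a x / d x)"
  unfolding divide_inverse
proof (rule smooth_algebra_inverse_imp_smooth_on[of U d])
  show "(\<lambda>x. a x * inverse (d x)) \<in> smooth_algebra_inverse U d"
    by (intro smooth_algebra_inverse.mult smooth_algebra_inverse.inverse
        smooth_algebra_inverse.smooth assms(1))
qed (use assms in auto)

lemma smooth_on_sum:
  fixes a :: "'i \<Rightarrow> 'a::euclidean_space \<Rightarrow> real"
  assumes "open U" "\<And>i. i \<in> I \<Longrightarrow> smooth_on U (a i)"
  shows "smooth_on U (\<lambda>x. \<Sum>i\<in>I. a i x)"
  using assms(2)
proof (induction I rule: infinite_finite_induct)
  case (insert i I)
  then show ?case
    using smooth_on_add[of U "a i" "\<lambda>x. \<Sum>i\<in>I. a i x"] by simp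
qed (simp_all add: smooth_on_const assms(1))

lemma smooth_on_prod:
  fixes a :: "'i \<Rightarrow> 'a::euclidean_space \<Rightarrow> real"
  assumes "open U" "\<And>i. i \<in> I \<Longrightarrow> smooth_on U (a i)"
  shows "smooth_on U (\<lambda>x. \<Prod>i\<in>I. a i x)"
  using assms(2)
proof (induction I rule: infinite_finite_induct)
  case (insert i I)
  then show ?case
    using smooth_on_mult[of U "a i" "\<lambda>x. \<Prod>i\<in>I. a i x"] by simp
qed (simp_all add: smooth_on_const assms(1))

lemma smooth_on_det:
  fixes M :: "'a::euclidean_space \<Rightarrow> real mat"
  assumes U: "open U" and M: "\<And>y. M y \<in> carrier_mat n n"
    and entries: "\<And>i j. i < n \<Longrightarrow> j < n \<Longrightarrow> smooth_on U (\<lambda>y. M y $$ (i, j))"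
  shows "smooth_on U (\<lambda>y. Determinant.det (M y))"
proof -
  have "smooth_on U (\<lambda>y. signof p * (\<Prod>i = 0..<n. M y $$ (i, p i)))"
    if p: "p permutes {0..<n}" for p
  proof (intro smooth_on_mult smooth_on_const U smooth_on_prod)
    fix i assume "i \<in> {0..<n}"
    then show "smooth_on U (\<lambda>y. M y $$ (i, p i))"
      using permutes_in_image[OF p, of i] by (intro entries) auto
  qed
  then have "smooth_on U
      (\<lambda>y. \<Sum>p\<in>{p. p permutes {0..<n}}. signof p * (\<Prod>i = 0..<n. M y $$ (i, p i)))"
    by (intro smooth_on_sum U) auto
  then show ?thesis
    using det_def'[OF M] by simp
qed

lemma smooth_on_adj_mat:
  fixes M :: "'a::euclidean_space \<Rightarrow> real mat"
  assumes U: "open U" and M: "\<And>y. M y \<in> carrier_mat n n"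
    and entries: "\<And>i j. i < n \<Longrightarrow> j < n \<Longrightarrow> smooth_on U (\<lambda>y. M y $$ (i, j))"
    and "i < n" "j < n"
  shows "smooth_on U (\<lambda>y. adj_mat (M y) $$ (i, j))"
proof -
  have dims: "dim_row (M y) = n" "dim_col (M y) = n" for y
    using M[of y] by auto
  have "smooth_on U (\<lambda>y. Determinant.det (mat_delete (M y) j i))"
  proof (rule smooth_on_det[OF U mat_delete_carrier[OF M]])
    fix i' j' assume "i' < n - 1" "j' < n - 1"
    then show "smooth_on U (\<lambda>y. mat_delete (M y) j i $$ (i', j'))"
      unfolding mat_delete_def using dims by (simp add: entries)
  qed
  then have "smooth_on U (\<lambda>y. (-1) ^ (j + i) * Determinant.det (mat_delete (M y) j i))"
    by (rule smooth_on_mult[OF smooth_on_const[OF U]])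
  then show ?thesis
    using assms(4,5) dims unfolding adj_mat_def cofactor_def by simp
qed

section \<open>Positive definite forms and Riesz representers\<close>

definition pos_def_form :: "('a::real_vector \<Rightarrow> 'a \<Rightarrow> real) \<Rightarrow> bool" where
  "pos_def_form G \<longleftrightarrow> bilinear G \<and> (\<forall>u v. G u v = G v u) \<and> (\<forall>u. u \<noteq> 0 \<longrightarrow> 0 < G u u)"

lemma pos_def_form_nonneg: "pos_def_form G \<Longrightarrow> 0 \<le> G u u"
  unfolding pos_def_form_def by (metis bilinear_lzero order.refl order.strict_implies_order)

lemma pos_def_form_eq_0_iff: "pos_def_form G \<Longrightarrow> G u u = 0 \<longleftrightarrow> u = 0"
  unfolding pos_def_form_def by (metis bilinear_lzero less_irrefl)

lemma pos_def_form_linear: "pos_def_form G \<Longrightarrow> linear (G u)"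
  unfolding pos_def_form_def bilinear_def by blast

definition basis_list :: "'a::euclidean_space list" where
  "basis_list = (SOME bs. distinct bs \<and> set bs = Basis)"

lemma basis_list:
  "distinct (basis_list :: 'a::euclidean_space list)" "set (basis_list :: 'a list) = Basis"
proof -
  have "\<exists>bs. distinct bs \<and> set bs = (Basis :: 'a set)"
    using finite_distinct_list[OF finite_Basis] by blast
  from someI_ex[OF this]
  show "distinct (basis_list :: 'a list)" "set (basis_list :: 'a list) = Basis"
    unfolding basis_list_def by auto
qed

lemma length_basis_list: "length (basis_list :: 'a::euclidean_space list) = DIM('a)"
  by (metis basis_list distinct_card)

definition of_coords :: "real Matrix.vec \<Rightarrow> 'a::euclidean_space" where
  "of_coords c = (\<Sum>i<DIM('a). c $ i *\<^sub>R basis_list ! i)"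

definition gram_mat :: "('a::euclidean_space \<Rightarrow> 'a \<Rightarrow> real) \<Rightarrow> real mat" where
  "gram_mat G = mat DIM('a) DIM('a) (\<lambda>(i, j). G (basis_list ! i) (basis_list ! j))"

text \<open>Cramer's rule for the Gram system. The explicit formula is what makes the gradient
  smooth in a chart (smooth_on_riesz_value).\<close>
definition cramer_representer :: "('a::euclidean_space \<Rightarrow> 'a \<Rightarrow> real) \<Rightarrow> ('a \<Rightarrow> real) \<Rightarrow> 'a" where
  "cramer_representer G D = of_coords ((1 / Determinant.det (gram_mat G)) \<cdot>\<^sub>v
     (adj_mat (gram_mat G) *\<^sub>v vec DIM('a) (\<lambda>j. D (basis_list ! j))))"

lemma gram_mat_carrier:
  "gram_mat (G :: 'a \<Rightarrow> 'a \<Rightarrow> real) \<in> carrier_mat DIM('a::euclidean_space) DIM('a)"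
  unfolding gram_mat_def by simp

lemma inner_of_coords:
  assumes "k < DIM('a)"
  shows "inner (of_coords c :: 'a::euclidean_space) (basis_list ! k) = c $ k"
proof -
  have "inner (basis_list ! i) (basis_list ! k :: 'a) = (if i = k then 1 else 0)"
    if "i < DIM('a)" for i
    using that assms basis_list inner_Basis nth_eq_iff_index_eq nth_mem length_basis_list
    by (metis (no_types, lifting))
  then have "inner (of_coords c :: 'a) (basis_list ! k) = (\<Sum>i<DIM('a). if i = k then c $ k else 0)"
    unfolding of_coords_def inner_sum_left by (intro sum.cong) auto
  then show ?thesis
    using assms by simp
qed

lemma form_of_coords_basis_list:
  fixes G :: "'a::euclidean_space \<Rightarrow> 'a \<Rightarrow> real"
  assumes G: "pos_def_form G" and k: "k < DIM('a)" and c: "c \<in> carrier_vec DIM('a)"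
  shows "G (of_coords c) (basis_list ! k) = (gram_mat G *\<^sub>v c) $ k"
proof -
  interpret linear "\<lambda>u. G u (basis_list ! k)"
    using G unfolding pos_def_form_def bilinear_def by blast
  have "G (of_coords c) (basis_list ! k) =
      (\<Sum>i<DIM('a). c $ i * G (basis_list ! i) (basis_list ! k))"
    unfolding of_coords_def by (simp add: sum scale)
  also have "\<dots> = (\<Sum>i<DIM('a). c $ i * G (basis_list ! k) (basis_list ! i))"
    using G unfolding pos_def_form_def by metis
  also have "\<dots> = (gram_mat G *\<^sub>v c) $ k"
    using k c
    by (auto simp: gram_mat_def scalar_prod_def lessThan_atLeast0 mult.commute intro: sum.cong)
  finally show ?thesis .
qed

lemma linear_eq_on_basis_list:
  fixes L L' :: "'a::euclidean_space \<Rightarrow> real"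
  assumes "linear L" "linear L'" "\<And>k. k < DIM('a) \<Longrightarrow> L (basis_list ! k) = L' (basis_list ! k)"
  shows "L = L'"
  using linear_eq_stdbasis[OF assms(1,2)] assms(3) basis_list(2) length_basis_list
  by (metis in_set_conv_nth)

lemma det_gram_mat_nonzero:
  fixes G :: "'a::euclidean_space \<Rightarrow> 'a \<Rightarrow> real"
  assumes G: "pos_def_form G"
  shows "Determinant.det (gram_mat G) \<noteq> 0"
proof
  assume "Determinant.det (gram_mat G) = 0"
  then obtain c where c: "c \<in> carrier_vec DIM('a)" "c \<noteq> 0\<^sub>v DIM('a)"
    "gram_mat G *\<^sub>v c = 0\<^sub>v DIM('a)"
    using det_0_iff_vec_prod_zero[OF gram_mat_carrier] by blast
  have "G (of_coords c) = (\<lambda>_. 0)"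
    using form_of_coords_basis_list[OF G _ c(1)] c(3)
    by (intro linear_eq_on_basis_list pos_def_form_linear[OF G]) (auto simp: linear_zero)
  then have "of_coords c = (0 :: 'a)"
    using pos_def_form_eq_0_iff[OF G] by metis
  then have "c = 0\<^sub>v DIM('a)"
    using inner_of_coords[where 'a='a, of _ c] c(1) by (intro eq_vecI) auto
  with c(2) show False ..
qed

lemma cramer_representer:
  fixes G :: "'a::euclidean_space \<Rightarrow> 'a \<Rightarrow> real"
  assumes G: "pos_def_form G" and D: "linear D"
  shows "G (cramer_representer G D) = D"
proof (rule linear_eq_on_basis_list[OF pos_def_form_linear[OF G] D])
  let ?M = "gram_mat G" and ?d = "vec DIM('a) (\<lambda>j. D (basis_list ! j))"
  let ?c = "(1 / Determinant.det ?M) \<cdot>\<^sub>v (adj_mat ?M *\<^sub>v ?d)"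
  have M: "?M \<in> carrier_mat DIM('a) DIM('a)" and A: "adj_mat ?M \<in> carrier_mat DIM('a) DIM('a)"
    using gram_mat_carrier adj_mat(1)[OF gram_mat_carrier] by blast+
  have "?M *\<^sub>v ?c = (1 / Determinant.det ?M) \<cdot>\<^sub>v ((?M * adj_mat ?M) *\<^sub>v ?d)"
    using M A by (simp add: mult_mat_vec[OF M])
  also have "\<dots> = ?d"
    using adj_mat(2)[OF M] det_gram_mat_nonzero[OF G] by (auto intro!: eq_vecI)
  finally have Mc: "?M *\<^sub>v ?c = ?d" .
  fix k assume k: "k < DIM('a)"
  show "G (cramer_representer G D) (basis_list ! k) = D (basis_list ! k)"
    unfolding cramer_representer_def using form_of_coords_basis_list[OF G k] A k Mc by simp
qed

definition riesz_representer :: "('a::real_vector \<Rightarrow> 'a \<Rightarrow> real) \<Rightarrow> ('a \<Rightarrow> real) \<Rightarrow> 'a" where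
  "riesz_representer G D = (THE w. \<forall>v. G w v = D v)"

lemma riesz_representer_eqI:
  assumes G: "pos_def_form G" and w: "G w = D"
  shows "riesz_representer G D = w"
  unfolding riesz_representer_def
proof (rule the_equality)
  fix w' assume w': "\<forall>v. G w' v = D v"
  have "G (w' - w) (w' - w) = G w' (w' - w) - G w (w' - w)"
    using G unfolding pos_def_form_def by (simp add: bilinear_lsub)
  then have "G (w' - w) (w' - w) = 0"
    using w w' by simp
  then show "w' = w"
    using pos_def_form_eq_0_iff[OF G] by simp
qed (use w in simp)

context
  fixes G :: "'a::euclidean_space \<Rightarrow> 'a \<Rightarrow> real" and D :: "'a \<Rightarrow> real"
  assumes G: "pos_def_form G" and D: "linear D"
begin

lemma riesz_representer_eq_cramer: "riesz_representer G D = cramer_representer G D"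
  using riesz_representer_eqI[OF G cramer_representer[OF G D]] .

lemma riesz_representer: "G (riesz_representer G D) = D"
  using cramer_representer[OF G D] riesz_representer_eq_cramer by simp

lemma riesz_representer_eq_0_iff: "riesz_representer G D = 0 \<longleftrightarrow> D = (\<lambda>_. 0)"
  using riesz_representer G unfolding pos_def_form_def
  by (metis bilinear_lzero pos_def_form_eq_0_iff[OF G])

lemma riesz_value: "D (riesz_representer G D) = G (riesz_representer G D) (riesz_representer G D)"
  using riesz_representer by simp

lemma riesz_value_nonneg: "0 \<le> D (riesz_representer G D)"
  using riesz_value pos_def_form_nonneg[OF G] by simp

lemma riesz_value_eq_0_iff: "D (riesz_representer G D) = 0 \<longleftrightarrow> D = (\<lambda>_. 0)"
  using riesz_value pos_def_form_eq_0_iff[OF G] riesz_representer_eq_0_iff by simp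

lemma riesz_cauchy_schwarz: "(D v)\<^sup>2 \<le> D (riesz_representer G D) * G v v"
proof (cases "D = (\<lambda>_. 0)")
  case False
  let ?w = "riesz_representer G D"
  have Dw: "0 < D ?w"
    using False riesz_value_nonneg riesz_value_eq_0_iff by auto
  have b: "bilinear G" and sym: "G v ?w = D v"
    using G riesz_representer unfolding pos_def_form_def by metis+
  define s where "s = D v / D ?w"
  have "0 \<le> G (v - s *\<^sub>R ?w) (v - s *\<^sub>R ?w)"
    by (rule pos_def_form_nonneg[OF G])
  also have "\<dots> = G v v - 2 * s * D v + s\<^sup>2 * D ?w"
    using riesz_representer sym
    by (simp add: bilinear_lsub[OF b] bilinear_rsub[OF b] bilinear_lmul[OF b] bilinear_rmul[OF b]
        power2_eq_square algebra_simps)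
  also have "\<dots> = G v v - (D v)\<^sup>2 / D ?w"
    using Dw unfolding s_def by (simp add: field_simps power2_eq_square)
  finally show ?thesis
    using Dw by (simp add: field_simps)
qed simp

lemma conformality_factor_riesz_value:
  assumes "D \<noteq> (\<lambda>_. 0)"
  shows "conformality_factor G (\<lambda>a b. a * b) D (D (riesz_representer G D))"
  unfolding conformality_factor_def
proof (intro conjI D exI[of _ "range (\<lambda>t. t *\<^sub>R riesz_representer G D)"])
  let ?w = "riesz_representer G D"
  show Dw: "0 < D ?w"
    using assms riesz_value_nonneg riesz_value_eq_0_iff by auto
  show "subspace (range (\<lambda>t. t *\<^sub>R ?w))"
    by (metis span_singleton subspace_span)
  show "range (\<lambda>t. t *\<^sub>R ?w) \<inter> {v. D v = 0} = {0}"
    using Dw by (auto simp: linear_scale[OF D] linear_0[OF D])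
  show "\<forall>v. \<exists>k c. D k = 0 \<and> c \<in> range (\<lambda>t. t *\<^sub>R ?w) \<and> v = k + c"
  proof
    fix v
    show "\<exists>k c. D k = 0 \<and> c \<in> range (\<lambda>t. t *\<^sub>R ?w) \<and> v = k + c"
      using Dw by (intro exI[of _ "v - (D v / D ?w) *\<^sub>R ?w"] exI[of _ "(D v / D ?w) *\<^sub>R ?w"])
        (auto simp: linear_diff[OF D] linear_scale[OF D])
  qed
  have "bilinear G"
    using G unfolding pos_def_form_def by blast
  then show "\<forall>u\<in>range (\<lambda>t. t *\<^sub>R ?w). \<forall>v\<in>range (\<lambda>t. t *\<^sub>R ?w). D u * D v = D ?w * G u v"
    using riesz_representer by (auto simp: linear_scale[OF D] bilinear_lmul bilinear_rmul)
qed

lemma conformality_factor_le_riesz_value: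
  assumes cf: "conformality_factor G (\<lambda>a b. a * b) D r" and "D \<noteq> (\<lambda>_. 0)"
  shows "r \<le> D (riesz_representer G D)"
proof -
  obtain C where C: "\<forall>v. \<exists>k c. D k = 0 \<and> c \<in> C \<and> v = k + c"
    and conf: "\<forall>u\<in>C. \<forall>v\<in>C. D u * D v = r * G u v"
    using cf unfolding conformality_factor_def by blast
  obtain v0 where "D v0 \<noteq> 0"
    using assms(2) by blast
  then obtain c where c: "c \<in> C" "D c \<noteq> 0"
    using C by (metis add_0 linear_add[OF D])
  then have "0 < G c c"
    using G linear_0[OF D] unfolding pos_def_form_def by metis
  moreover have "r * G c c \<le> D (riesz_representer G D) * G c c"
    using conf c(1) riesz_cauchy_schwarz[of c] by (simp add: power2_eq_square)
  ultimately show ?thesis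
    by simp
qed

end

lemma conformality_factor_zero:
  assumes "pos_def_form G" "0 < r"
  shows "conformality_factor G (\<lambda>a b. a * b) (\<lambda>_. 0) r"
  unfolding conformality_factor_def
proof (intro conjI exI[of _ "{0}"])
  show "\<forall>u\<in>{0}. \<forall>v\<in>{0}. 0 * 0 = r * G u v"
    using assms(1) unfolding pos_def_form_def by (simp add: bilinear_lzero)
qed (use assms(2) in \<open>auto simp: subspace_def linear_zero\<close>)

text \<open>Applied with both orders of two charts, this shows that the squared length of the
  gradient does not depend on the chart, without having to invert the chart transition.\<close>
lemma riesz_value_pullback_le:
  fixes G1 G2 :: "'a::euclidean_space \<Rightarrow> 'a \<Rightarrow> real"
  assumes G1: "pos_def_form G1" and D1: "linear D1" and G2: "pos_def_form G2" and D2: "linear D2"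
    and pullback: "\<And>u v. G2 u v = G1 (T u) (T v)" "\<And>u. D2 u = D1 (T u)"
  shows "D2 (riesz_representer G2 D2) \<le> D1 (riesz_representer G1 D1)"
proof -
  let ?w2 = "riesz_representer G2 D2" and ?r1 = "D1 (riesz_representer G1 D1)"
  have "(D2 ?w2)\<^sup>2 = (D1 (T ?w2))\<^sup>2"
    using pullback by simp
  also have "\<dots> \<le> ?r1 * G1 (T ?w2) (T ?w2)"
    by (rule riesz_cauchy_schwarz[OF G1 D1])
  also have "\<dots> = ?r1 * D2 ?w2"
    using pullback riesz_value[OF G2 D2] by simp
  finally have "(D2 ?w2)\<^sup>2 \<le> ?r1 * D2 ?w2" .
  then show ?thesis
    using riesz_value_nonneg[OF G1 D1] riesz_value_nonneg[OF G2 D2]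
    by (cases "D2 ?w2 = 0") (auto simp: power2_eq_square)
qed

lemma smooth_on_riesz_value:
  fixes G :: "'a::euclidean_space \<Rightarrow> 'b::euclidean_space \<Rightarrow> 'b \<Rightarrow> real" and D :: "'a \<Rightarrow> 'b \<Rightarrow> real"
  assumes U: "open U"
    and G_smooth: "\<And>u v. smooth_on U (\<lambda>y. G y u v)" and D_smooth: "\<And>v. smooth_on U (\<lambda>y. D y v)"
    and G: "\<And>y. y \<in> U \<Longrightarrow> pos_def_form (G y)" and D: "\<And>y. y \<in> U \<Longrightarrow> linear (D y)"
  shows "smooth_on U (\<lambda>y. D y (riesz_representer (G y) (D y)))"
proof -
  let ?M = "\<lambda>y. gram_mat (G y)" and ?b = "basis_list :: 'b list"
  let ?coeff =
    "\<lambda>i y. (\<Sum>j<DIM('b). adj_mat (?M y) $$ (i, j) * D y (?b ! j)) / Determinant.det (?M y)"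
  have entries: "smooth_on U (\<lambda>y. ?M y $$ (i, j))" if "i < DIM('b)" "j < DIM('b)" for i j
    using that G_smooth by (simp add: gram_mat_def)
  have "smooth_on U (?coeff i)" if "i < DIM('b)" for i
  proof (rule smooth_on_divide)
    show "smooth_on U (\<lambda>y. \<Sum>j<DIM('b). adj_mat (?M y) $$ (i, j) * D y (?b ! j))"
      using smooth_on_adj_mat[OF U gram_mat_carrier entries that] D_smooth
      by (intro smooth_on_sum[OF U] smooth_on_mult) auto
    show "smooth_on U (\<lambda>y. Determinant.det (?M y))"
      by (rule smooth_on_det[OF U gram_mat_carrier entries])
  qed (use det_gram_mat_nonzero G in blast)
  then have sum: "smooth_on U (\<lambda>y. \<Sum>i<DIM('b). ?coeff i y * D y (?b ! i))"
    using D_smooth by (intro smooth_on_sum[OF U] smooth_on_mult) auto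
  have eq: "D y (riesz_representer (G y) (D y)) = (\<Sum>i<DIM('b). ?coeff i y * D y (?b ! i))"
    if "y \<in> U" for y
    using adj_mat(1)[OF gram_mat_carrier, of "G y"]
    by (simp add: riesz_representer_eq_cramer[OF G[OF that] D[OF that]] cramer_representer_def
        of_coords_def linear_sum[OF D[OF that]] linear_scale[OF D[OF that]] scalar_prod_def
        lessThan_atLeast0 sum_divide_distrib)
  show ?thesis
    using smooth_on_cong[OF U eq[symmetric] sum] .
qed

section \<open>Smooth functions on a manifold\<close>

lemma connected_space_locally_constant:
  assumes X: "connected_space X"
    and loc: "\<And>x. x \<in> topspace X \<Longrightarrow> \<exists>N. openin X N \<and> x \<in> N \<and> (\<forall>p\<in>N. h p = h x)"
  shows "\<exists>k. \<forall>x\<in>topspace X. h x = k"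
proof -
  have "openin X {x \<in> topspace X. h x \<in> U}" for U
  proof (rule openin_subopen[THEN iffD2], rule ballI)
    fix x assume x: "x \<in> {x \<in> topspace X. h x \<in> U}"
    then obtain N where N: "openin X N" "x \<in> N" "\<forall>p\<in>N. h p = h x"
      using loc by blast
    moreover have "N \<subseteq> {x \<in> topspace X. h x \<in> U}"
      using N(3) x openin_subset[OF N(1)] by auto
    ultimately show "\<exists>T. openin X T \<and> x \<in> T \<and> T \<subseteq> {x \<in> topspace X. h x \<in> U}"
      by blast
  qed
  then have "continuous_map X (discrete_topology UNIV) h"
    by (simp add: continuous_map_def)
  then have "connectedin (discrete_topology UNIV) (h ` topspace X)"
    using X by (simp add: connectedin_continuous_map_image connectedin_topspace)
  then show ?thesis
    unfolding connectedin_discrete_topology by (metis image_subset_iff singletonD)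
qed

locale smooth_atlas =
  fixes X :: "'m topology" and A :: "('m, 'e::euclidean_space) chart set"
  assumes atlas: "smooth_manifold X A"
begin

lemma topspace_eq_Union_charts: "topspace X = (\<Union>c\<in>A. fst c)"
  using atlas unfolding smooth_manifold_def by blast

lemma openin_chart_domain: "c \<in> A \<Longrightarrow> openin X (fst c)"
  using atlas unfolding smooth_manifold_def by blast

lemma open_chart_image: "c \<in> A \<Longrightarrow> open (snd c ` fst c)"
  using atlas unfolding smooth_manifold_def by blast

lemma chart_homeomorphic_map:
  "c \<in> A \<Longrightarrow> homeomorphic_map (subtopology X (fst c)) (top_of_set (snd c ` fst c)) (snd c)"
  using atlas unfolding smooth_manifold_def by blast

lemma smooth_on_transition:
  "c \<in> A \<Longrightarrow> d \<in> A \<Longrightarrow> smooth_on (snd d ` (fst c \<inter> fst d)) (snd c \<circ> chart_inv d)"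
  using atlas unfolding smooth_manifold_def by blast

lemma chart_domain_subset: "c \<in> A \<Longrightarrow> fst c \<subseteq> topspace X"
  using openin_chart_domain openin_subset by blast

lemma chart_inv_chart:
  assumes c: "c \<in> A" and p: "p \<in> fst c"
  shows "chart_inv c (snd c p) = p"
proof -
  have "inj_on (snd c) (topspace X \<inter> fst c)"
    using homeomorphic_imp_injective_map[OF chart_homeomorphic_map[OF c]] by simp
  then have "inj_on (snd c) (fst c)"
    using chart_domain_subset[OF c] by (simp add: Int_absorb1)
  then show ?thesis
    unfolding chart_inv_def using p by (rule inv_into_f_f)
qed

lemma chart_inv_in_domain: "y \<in> snd c ` fst c \<Longrightarrow> chart_inv c y \<in> fst c"
  unfolding chart_inv_def by (rule inv_into_into)

lemma chart_chart_inv: "y \<in> snd c ` fst c \<Longrightarrow> snd c (chart_inv c y) = y"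
  unfolding chart_inv_def by (rule f_inv_into_f)

lemma openin_chart_preimage:
  assumes c: "c \<in> A" and W: "open W"
  shows "openin X {p \<in> fst c. snd c p \<in> W}"
proof -
  let ?P = "{p \<in> topspace (subtopology X (fst c)). snd c p \<in> snd c ` fst c \<inter> W}"
  have "openin (subtopology X (fst c)) ?P"
    using homeomorphic_imp_continuous_map[OF chart_homeomorphic_map[OF c]] W
    by (rule openin_continuous_map_preimage[OF _ openin_open_Int])
  moreover have "?P = {p \<in> fst c. snd c p \<in> W}"
    using chart_domain_subset[OF c] by auto
  ultimately show ?thesis
    using openin_trans_full[OF _ openin_chart_domain[OF c]] by simp
qed

lemma smooth_fun_imp_continuous_map:
  assumes h: "smooth_fun A h"
  shows "continuous_map X euclideanreal h"
proof (rule pasting_lemma[where I = A and T = "\<lambda>c. fst c" and f = "\<lambda>_. h"])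
  fix c assume c: "c \<in> A"
  have "continuous_map (top_of_set (snd c ` fst c)) euclideanreal (h \<circ> chart_inv c)"
    using h c smooth_on_imp_continuous_on[of "snd c ` fst c" "h \<circ> chart_inv c"]
    unfolding smooth_fun_def by simp
  then have "continuous_map (subtopology X (fst c)) euclideanreal ((h \<circ> chart_inv c) \<circ> snd c)"
    by (rule continuous_map_compose
        [OF homeomorphic_imp_continuous_map[OF chart_homeomorphic_map[OF c]]])
  then show "continuous_map (subtopology X (fst c)) euclideanreal h"
    by (rule continuous_map_eq) (use chart_inv_chart[OF c] in auto)
qed (use openin_chart_domain topspace_eq_Union_charts in auto)

lemma smooth_fun_const: "smooth_fun A (\<lambda>_. k)"
  unfolding smooth_fun_def using open_chart_image by (simp add: o_def smooth_on_const)

lemma constant_if_dfun_eq_0: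
  assumes X: "connected_space X" and h: "smooth_fun A h"
    and dh: "\<And>c x. c \<in> A \<Longrightarrow> x \<in> fst c \<Longrightarrow> dfun h c x = (\<lambda>_. 0)"
  shows "\<exists>k. \<forall>x\<in>topspace X. h x = k"
proof (rule connected_space_locally_constant[OF X])
  fix x assume "x \<in> topspace X"
  then obtain c where c: "c \<in> A" and x: "x \<in> fst c"
    using topspace_eq_Union_charts by blast
  let ?V = "snd c ` fst c" and ?h = "h \<circ> chart_inv c"
  obtain r where r: "0 < r" "ball (snd c x) r \<subseteq> ?V"
    using open_chart_image[OF c] x by (meson imageI openE)
  have "(?h has_derivative (\<lambda>_. 0)) (at y within ball (snd c x) r)" if "y \<in> ball (snd c x) r" for y
  proof -
    have y: "y \<in> ?V"
      using that r by blast
    have "(?h has_derivative frechet_derivative ?h (at y)) (at y)"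
      using h c y unfolding smooth_fun_def by (blast intro: smooth_on_imp_has_derivative)
    moreover have "frechet_derivative ?h (at y) = (\<lambda>_. 0)"
      using dh[OF c chart_inv_in_domain[OF y]] chart_chart_inv[OF y] unfolding dfun_def by simp
    ultimately show ?thesis
      by (simp add: has_derivative_at_withinI)
  qed
  then obtain k where k: "\<forall>y\<in>ball (snd c x) r. ?h y = k"
    using has_derivative_zero_constant[OF convex_ball] by blast
  have "h p = h x" if "p \<in> fst c" "snd c p \<in> ball (snd c x) r" for p
  proof -
    have "h p = ?h (snd c p)" and "h x = ?h (snd c x)"
      using chart_inv_chart[OF c] that(1) x by simp_all
    then show ?thesis
      using k that(2) r(1) by simp
  qed
  moreover have "x \<in> {p \<in> fst c. snd c p \<in> ball (snd c x) r}"
    using x r(1) by simp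
  ultimately show "\<exists>N. openin X N \<and> x \<in> N \<and> (\<forall>p\<in>N. h p = h x)"
    using openin_chart_preimage[OF c open_ball] by blast
qed

end

section \<open>The gradient of a smooth function\<close>

definition sq_norm_grad ::
  "('m, 'e::euclidean_space) chart set \<Rightarrow> (('m, 'e) chart \<Rightarrow> 'e \<Rightarrow> 'e \<Rightarrow> 'e \<Rightarrow> real) \<Rightarrow>
    ('m \<Rightarrow> real) \<Rightarrow> 'm \<Rightarrow> real"
  where "sq_norm_grad A g f x = (let c = SOME c. c \<in> A \<and> x \<in> fst c in dfun f c x (grad g f c x))"

lemma grad_eq_riesz_representer: "grad g f c x = riesz_representer (g c (snd c x)) (dfun f c x)"
  unfolding grad_def riesz_representer_def ..

locale riemannian_function = smooth_atlas X A
  for X :: "'m topology" and A :: "('m, 'e::euclidean_space) chart set" +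
  fixes g :: "('m, 'e) chart \<Rightarrow> 'e \<Rightarrow> 'e \<Rightarrow> 'e \<Rightarrow> real" and f :: "'m \<Rightarrow> real"
  assumes metric: "riemannian_metric X A g" and f_smooth: "smooth_fun A f"
begin

lemma pos_def_form_metric: "c \<in> A \<Longrightarrow> y \<in> snd c ` fst c \<Longrightarrow> pos_def_form (g c y)"
  using metric unfolding riemannian_metric_def pos_def_form_def by blast

lemma smooth_on_metric: "c \<in> A \<Longrightarrow> smooth_on (snd c ` fst c) (\<lambda>y. g c y u v)"
  using metric unfolding riemannian_metric_def by blast

lemma metric_transition:
  "c \<in> A \<Longrightarrow> d \<in> A \<Longrightarrow> p \<in> fst c \<inter> fst d \<Longrightarrow>
    g d (snd d p) u v =
    g c (snd c p) (frechet_derivative (snd c \<circ> chart_inv d) (at (snd d p)) u)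
      (frechet_derivative (snd c \<circ> chart_inv d) (at (snd d p)) v)"
  using metric unfolding riemannian_metric_def by blast

lemma smooth_on_local_representative: "c \<in> A \<Longrightarrow> smooth_on (snd c ` fst c) (f \<circ> chart_inv c)"
  using f_smooth unfolding smooth_fun_def by blast

lemma has_derivative_dfun:
  assumes "c \<in> A" "x \<in> fst c"
  shows "((f \<circ> chart_inv c) has_derivative dfun f c x) (at (snd c x))"
  unfolding dfun_def
  using smooth_on_imp_has_derivative[OF smooth_on_local_representative[OF assms(1)]] assms(2)
  by simp

lemma linear_dfun: "c \<in> A \<Longrightarrow> x \<in> fst c \<Longrightarrow> linear (dfun f c x)"
  using has_derivative_dfun has_derivative_linear by blast

lemma dfun_transition:
  assumes c: "c \<in> A" and d: "d \<in> A" and p: "p \<in> fst c \<inter> fst d"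
  shows "dfun f d p u = dfun f c p (frechet_derivative (snd c \<circ> chart_inv d) (at (snd d p)) u)"
proof -
  let ?O = "snd d ` (fst c \<inter> fst d)" and ?\<tau> = "snd c \<circ> chart_inv d"
  have \<tau>: "smooth_on ?O ?\<tau>"
    by (rule smooth_on_transition[OF c d])
  have O: "open ?O" and y: "snd d p \<in> ?O"
    using \<tau> p unfolding smooth_on_def by auto
  have "?\<tau> (snd d p) = snd c p"
    using chart_inv_chart[OF d] p by simp
  then have "((f \<circ> chart_inv c) has_derivative dfun f c p) (at (?\<tau> (snd d p)))"
    using has_derivative_dfun[OF c] p by simp
  then have "((f \<circ> chart_inv c) \<circ> ?\<tau> has_derivative
      dfun f c p \<circ> frechet_derivative ?\<tau> (at (snd d p))) (at (snd d p))"
    by (rule diff_chain_at[OF smooth_on_imp_has_derivative[OF \<tau> y]])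
  moreover have "((f \<circ> chart_inv c) \<circ> ?\<tau>) y = (f \<circ> chart_inv d) y" if "y \<in> ?O" for y
    using that chart_inv_chart[OF c] chart_inv_chart[OF d] by auto
  ultimately have "((f \<circ> chart_inv d) has_derivative
      dfun f c p \<circ> frechet_derivative ?\<tau> (at (snd d p))) (at (snd d p))"
    using has_derivative_transform_within_open[OF _ O y] by blast
  then have "dfun f d p = dfun f c p \<circ> frechet_derivative ?\<tau> (at (snd d p))"
    using has_derivative_unique has_derivative_dfun[OF d] p by blast
  then show ?thesis
    by simp
qed

lemma dfun_grad_chart_indep:
  assumes c: "c \<in> A" "x \<in> fst c" and d: "d \<in> A" "x \<in> fst d"
  shows "dfun f c x (grad g f c x) = dfun f d x (grad g f d x)"
proof -
  have le: "dfun f d x (grad g f d x) \<le> dfun f c x (grad g f c x)"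
    if "c \<in> A" "x \<in> fst c" "d \<in> A" "x \<in> fst d" for c d
    unfolding grad_eq_riesz_representer
  proof (rule riesz_value_pullback_le)
    show "pos_def_form (g c (snd c x))" "pos_def_form (g d (snd d x))"
      using that by (simp_all add: pos_def_form_metric)
    show "linear (dfun f c x)" "linear (dfun f d x)"
      using that by (simp_all add: linear_dfun)
    let ?T = "frechet_derivative (snd c \<circ> chart_inv d) (at (snd d x))"
    show "g d (snd d x) u v = g c (snd c x) (?T u) (?T v)" for u v
      using that by (intro metric_transition) auto
    show "dfun f d x u = dfun f c x (?T u)" for u
      using that by (intro dfun_transition) auto
  qed
  show ?thesis
    using le[OF c d] le[OF d c] by simp
qed

lemma sq_norm_grad_eq:
  assumes "c \<in> A" "x \<in> fst c"
  shows "sq_norm_grad A g f x = dfun f c x (grad g f c x)"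
proof -
  have "(SOME c. c \<in> A \<and> x \<in> fst c) \<in> A \<and> x \<in> fst (SOME c. c \<in> A \<and> x \<in> fst c)"
    using someI[of "\<lambda>c. c \<in> A \<and> x \<in> fst c"] assms by blast
  then show ?thesis
    unfolding sq_norm_grad_def Let_def using dfun_grad_chart_indep assms by blast
qed

lemma grad_eq_0_iff: "c \<in> A \<Longrightarrow> x \<in> fst c \<Longrightarrow> grad g f c x = 0 \<longleftrightarrow> dfun f c x = (\<lambda>_. 0)"
  unfolding grad_eq_riesz_representer
  by (intro riesz_representer_eq_0_iff pos_def_form_metric linear_dfun) auto

lemma sq_norm_grad_eq_0_iff:
  "c \<in> A \<Longrightarrow> x \<in> fst c \<Longrightarrow> sq_norm_grad A g f x = 0 \<longleftrightarrow> dfun f c x = (\<lambda>_. 0)"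
  unfolding sq_norm_grad_eq grad_eq_riesz_representer
  by (intro riesz_value_eq_0_iff pos_def_form_metric linear_dfun) auto

lemma sq_norm_grad_nonneg: "c \<in> A \<Longrightarrow> x \<in> fst c \<Longrightarrow> 0 \<le> sq_norm_grad A g f x"
  unfolding sq_norm_grad_eq grad_eq_riesz_representer
  by (intro riesz_value_nonneg pos_def_form_metric linear_dfun) auto

lemma smooth_fun_sq_norm_grad: "smooth_fun A (sq_norm_grad A g f)"
  unfolding smooth_fun_def
proof
  fix c assume c: "c \<in> A"
  let ?V = "snd c ` fst c" and ?D = "\<lambda>y. frechet_derivative (f \<circ> chart_inv c) (at y)"
  have smooth: "smooth_on ?V (\<lambda>y. ?D y (riesz_representer (g c y) (?D y)))"
  proof (rule smooth_on_riesz_value[OF open_chart_image[OF c] smooth_on_metric[OF c]])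
    show "smooth_on ?V (\<lambda>y. ?D y v)" for v
      by (rule smooth_on_frechet_derivative[OF smooth_on_local_representative[OF c]])
    show "pos_def_form (g c y)" if "y \<in> ?V" for y
      by (rule pos_def_form_metric[OF c that])
    show "linear (?D y)" if "y \<in> ?V" for y
      using linear_dfun[OF c chart_inv_in_domain[OF that]] chart_chart_inv[OF that]
      unfolding dfun_def by simp
  qed
  have eq: "?D y (riesz_representer (g c y) (?D y)) = (sq_norm_grad A g f \<circ> chart_inv c) y"
    if "y \<in> ?V" for y
    using sq_norm_grad_eq[OF c chart_inv_in_domain[OF that]] chart_chart_inv[OF that]
    by (simp add: grad_eq_riesz_representer dfun_def)
  show "smooth_on ?V (sq_norm_grad A g f \<circ> chart_inv c)"
    using smooth_on_cong[OF open_chart_image[OF c] eq smooth] .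
qed

lemma conformal_if_constant:
  assumes "\<exists>k. \<forall>x\<in>topspace X. f x = k"
  shows "conformal_riemannian_morphism_real X A g f"
proof -
  obtain k where k: "\<forall>x\<in>topspace X. f x = k"
    using assms by blast
  have dfun: "dfun f c x = (\<lambda>_. 0)" if c: "c \<in> A" and x: "x \<in> fst c" for c x
  proof -
    have "(f \<circ> chart_inv c) y = k" if "y \<in> snd c ` fst c" for y
      using k chart_inv_in_domain[OF that] chart_domain_subset[OF c] by auto
    then show ?thesis
      unfolding dfun_def using x
      by (simp add: frechet_derivative_cong_open[OF open_chart_image[OF c], of _ _ "\<lambda>_. k"])
  qed
  show ?thesis
    unfolding conformal_riemannian_morphism_real_def
  proof (intro conjI f_smooth exI[of _ "\<lambda>_. 1"] smooth_fun_const ballI impI)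
    fix x c assume "x \<in> topspace X" "c \<in> A" "x \<in> fst c"
    then show "conformality_factor (g c (snd c x)) (\<lambda>a b. a * b) (dfun f c x) 1"
      using dfun conformality_factor_zero[OF pos_def_form_metric] by simp
  qed simp
qed

lemma conformal_if_grad_nonzero:
  assumes grad: "\<forall>x\<in>topspace X. \<forall>c\<in>A. x \<in> fst c \<longrightarrow> grad g f c x \<noteq> 0"
  shows "conformal_riemannian_morphism_real X A g f"
  unfolding conformal_riemannian_morphism_real_def
proof (intro conjI f_smooth exI[of _ "sq_norm_grad A g f"] smooth_fun_sq_norm_grad ballI impI)
  fix x assume "x \<in> topspace X"
  then obtain c where c: "c \<in> A" "x \<in> fst c"
    using topspace_eq_Union_charts by blast
  then have "sq_norm_grad A g f x \<noteq> 0"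
    using sq_norm_grad_eq_0_iff[OF c] grad_eq_0_iff[OF c] grad \<open>x \<in> topspace X\<close> by blast
  then show "0 < sq_norm_grad A g f x"
    using sq_norm_grad_nonneg[OF c] by simp
next
  fix x c assume x: "x \<in> topspace X" and c: "c \<in> A" "x \<in> fst c"
  then have "dfun f c x \<noteq> (\<lambda>_. 0)"
    using grad grad_eq_0_iff[OF c] by blast
  then have "conformality_factor (g c (snd c x)) (\<lambda>a b. a * b) (dfun f c x)
      (dfun f c x (riesz_representer (g c (snd c x)) (dfun f c x)))"
    using c by (intro conformality_factor_riesz_value pos_def_form_metric linear_dfun) auto
  then show "conformality_factor (g c (snd c x)) (\<lambda>a b. a * b) (dfun f c x) (sq_norm_grad A g f x)"
    using sq_norm_grad_eq[OF c] by (simp add: grad_eq_riesz_representer)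
qed

lemma sq_norm_grad_eq_0_iff_less_conformality_factor:
  assumes c: "c \<in> A" "x \<in> fst c"
    and r: "conformality_factor (g c (snd c x)) (\<lambda>a b. a * b) (dfun f c x) r"
  shows "sq_norm_grad A g f x = 0 \<longleftrightarrow> sq_norm_grad A g f x < r"
proof -
  have "r \<le> sq_norm_grad A g f x" if "sq_norm_grad A g f x \<noteq> 0"
  proof -
    have "dfun f c x \<noteq> (\<lambda>_. 0)"
      using that sq_norm_grad_eq_0_iff[OF c] by blast
    then have "r \<le> dfun f c x (riesz_representer (g c (snd c x)) (dfun f c x))"
      using c r by (intro conformality_factor_le_riesz_value pos_def_form_metric linear_dfun) auto
    then show ?thesis
      using sq_norm_grad_eq[OF c] by (simp add: grad_eq_riesz_representer)
  qed
  moreover have "0 < r"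
    using r unfolding conformality_factor_def by blast
  ultimately show ?thesis
    by force
qed

lemma constant_or_grad_nonzero_if_conformal:
  assumes X: "connected_space X" and "conformal_riemannian_morphism_real X A g f"
  shows "(\<exists>k. \<forall>x\<in>topspace X. f x = k) \<or>
    (\<forall>x\<in>topspace X. \<forall>c\<in>A. x \<in> fst c \<longrightarrow> grad g f c x \<noteq> 0)"
proof -
  obtain \<Lambda> where \<Lambda>: "smooth_fun A \<Lambda>"
    and conf: "\<forall>x\<in>topspace X. \<forall>c\<in>A. x \<in> fst c \<longrightarrow>
      conformality_factor (g c (snd c x)) (\<lambda>a b. a * b) (dfun f c x) (\<Lambda> x)"
    using assms(2) unfolding conformal_riemannian_morphism_real_def by blast
  let ?\<rho> = "sq_norm_grad A g f"
  define Z where "Z = {x \<in> topspace X. ?\<rho> x \<in> {0}}"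
  have cont: "continuous_map X euclideanreal ?\<rho>" "continuous_map X euclideanreal \<Lambda>"
    using smooth_fun_sq_norm_grad \<Lambda> by (simp_all add: smooth_fun_imp_continuous_map)
  have "Z = {x \<in> topspace X. \<Lambda> x - ?\<rho> x \<in> {0<..}}"
    unfolding Z_def using conf topspace_eq_Union_charts
      sq_norm_grad_eq_0_iff_less_conformality_factor by fastforce
  moreover have "openin X {x \<in> topspace X. \<Lambda> x - ?\<rho> x \<in> {0<..}}"
    using cont
    by (intro openin_continuous_map_preimage[where Y = euclideanreal] continuous_map_diff) auto
  ultimately have "openin X Z"
    by simp
  moreover have "closedin X Z"
    unfolding Z_def using cont by (intro closedin_continuous_map_preimage) auto
  ultimately have "Z = {} \<or> Z = topspace X"
    using X connected_space_clopen_in by blast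
  then show ?thesis
  proof
    assume "Z = {}"
    then show ?thesis
      unfolding Z_def using sq_norm_grad_eq_0_iff grad_eq_0_iff by blast
  next
    assume "Z = topspace X"
    then have "dfun f c x = (\<lambda>_. 0)" if "c \<in> A" "x \<in> fst c" for c x
      unfolding Z_def using that chart_domain_subset sq_norm_grad_eq_0_iff by blast
    then show ?thesis
      using constant_if_dfun_eq_0[OF X f_smooth] by blast
  qed
qed

end

theorem mainTheorem1:
  fixes X :: "'m topology"
    and A :: "('m, 'e::euclidean_space) chart set"
    and g :: "('m, 'e) chart \<Rightarrow> 'e \<Rightarrow> 'e \<Rightarrow> 'e \<Rightarrow> real"
    and f :: "'m \<Rightarrow> real"
  assumes "riemannian_manifold X A g"
    and "connected_space X"
    and "smooth_fun A f"
  shows "conformal_riemannian_morphism_real X A g f \<longleftrightarrow>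
           ((\<exists>k. \<forall>x\<in>topspace X. f x = k) \<or>
            (\<forall>x\<in>topspace X. \<forall>c\<in>A. x \<in> fst c \<longrightarrow> grad g f c x \<noteq> 0))"
proof -
  interpret riemannian_function X A g f
    using assms(1,3) unfolding riemannian_manifold_def by unfold_locales auto
  show ?thesis
    using constant_or_grad_nonzero_if_conformal[OF assms(2)] conformal_if_constant
      conformal_if_grad_nonzero by blast
qed

end
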